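(* Consider the following optimization problem over user association $\mathbf{x}=(x_{ij})$, resource allocation $\mathbf{y}=(y_{ij})$ and power $\mathbf{p}=(p_i)$, $i\in\mathcal I=\{1,\dots,I\}$, $j\in\mathcal J=\{1,\dots,J\}$: \[ \max_{\mathbf x,\mathbf y,\mathbf p}\ \sum_{j\in\mathcal J}\omega_j\log_2\Big(KB\sum_{i\in\mathcal I}y_{ij}\log_2(1+\eta_{ij})\Big) \] subject to $\eta_{ij}=\dfrac{p_i g_{ij}}{\sum_{k\in\mathcal I\setminus\{i\}}d_k p_k g_{kj}+\sigma^2}$ for all $i,j$; $\sum_{i\in\mathcal I}x_{ij}=1$ for all $j$; $d_i=\sum_{j\in\mathcal J}y_{ij}$ for all $i$; $0\le p_i\le P_i$ for all $i$; $0\le d_i\le 1$ for all $i$; $0\le y_{ij}\le x_{ij}$ and $x_{ij}\in\{0,1\}$ for all $i,j$. Let $(\mathbf x^*,\mathbf y^*,\mathbf p^* )$ be an optimal solution, let $d_i^*=\sum_{j\in\mathcal J}y^*_{ij}$, and let $\mathcal J_i=\{j\in\mathcal J: x^*_{ij}=1\}$. Then \[ y^*_{ij}=\frac{\omega_j x^*_{ij} d^*_i}{\sum_{l\in\mathcal J}\omega_l x^*_{il}}\qquad\text{for all } i\in\mathcal I,\ j\in\mathcal J_i, \] where the right-hand side is defined to be $0$ in the case $d_i^*=0$ and $x^*_{ij}=0$ for all $j\in\mathcal J$.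
   Context: Downlink heterogeneous network with $I$ base stations (BSs) and $J$ users. $x_{ij}\in\{0,1\}$ indicates that user $j$ is associated with BS $i$; $y_{ij}$ is the fraction of time-frequency resource blocks BS $i$ allocates to user $j$; $d_i$ is the load of BS $i$; $p_i$ is the per-resource-block transmit power of BS $i$ with maximum $P_i>0$. The constants $K>0$ (number of resource blocks), $B>0$ (bandwidth per block), channel gains $g_{ij}>0$, noise power $\sigma^2>0$ and user priorities $\omega_j>0$ are given. $\eta_{ij}$ is the (load-coupled) average SINR of user $j$ served by BS $i$. *)

theory Defs
  imports "HOL-Analysis.Analysis" "HOL-Library.Extended_Real"
begin

text \<open>BSs are indexed by {1..nI}, users by {1..nJ}. The load of BS i is
  d_i = sum over users of y i j.\<close>

definition load :: "nat \<Rightarrow> (nat \<Rightarrow> nat \<Rightarrow> real) \<Rightarrow> nat \<Rightarrow> real" where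
  "load nJ y i = (\<Sum>j\<in>{1..nJ}. y i j)"

definition sinr :: "nat \<Rightarrow> nat \<Rightarrow> (nat \<Rightarrow> nat \<Rightarrow> real) \<Rightarrow> real \<Rightarrow>
    (nat \<Rightarrow> nat \<Rightarrow> real) \<Rightarrow> (nat \<Rightarrow> real) \<Rightarrow> nat \<Rightarrow> nat \<Rightarrow> real" where
  "sinr nI nJ g \<sigma>2 y p i j =
     p i * g i j / ((\<Sum>k\<in>{1..nI} - {i}. load nJ y k * p k * g k j) + \<sigma>2)"

definition rate :: "nat \<Rightarrow> nat \<Rightarrow> real \<Rightarrow> real \<Rightarrow> (nat \<Rightarrow> nat \<Rightarrow> real) \<Rightarrow> real \<Rightarrow>
    (nat \<Rightarrow> nat \<Rightarrow> real) \<Rightarrow> (nat \<Rightarrow> real) \<Rightarrow> nat \<Rightarrow> real" where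
  "rate nI nJ K B g \<sigma>2 y p j =
     K * B * (\<Sum>i\<in>{1..nI}. y i j * log 2 (1 + sinr nI nJ g \<sigma>2 y p i j))"

text \<open>log2 extended to nonpositive arguments by -infinity (the natural value
  of the objective term when a user's rate is zero).\<close>
definition elog2 :: "real \<Rightarrow> ereal" where
  "elog2 r = (if r > 0 then ereal (log 2 r) else -\<infinity>)"

definition objective :: "nat \<Rightarrow> nat \<Rightarrow> real \<Rightarrow> real \<Rightarrow> (nat \<Rightarrow> nat \<Rightarrow> real) \<Rightarrow> real \<Rightarrow>
    (nat \<Rightarrow> real) \<Rightarrow> (nat \<Rightarrow> nat \<Rightarrow> real) \<Rightarrow> (nat \<Rightarrow> real) \<Rightarrow> ereal" where
  "objective nI nJ K B g \<sigma>2 \<omega> y p =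
     (\<Sum>j\<in>{1..nJ}. ereal (\<omega> j) * elog2 (rate nI nJ K B g \<sigma>2 y p j))"

definition feasible :: "nat \<Rightarrow> nat \<Rightarrow> (nat \<Rightarrow> real) \<Rightarrow>
    (nat \<Rightarrow> nat \<Rightarrow> real) \<Rightarrow> (nat \<Rightarrow> nat \<Rightarrow> real) \<Rightarrow> (nat \<Rightarrow> real) \<Rightarrow> bool" where
  "feasible nI nJ P x y p \<longleftrightarrow>
     (\<forall>j\<in>{1..nJ}. (\<Sum>i\<in>{1..nI}. x i j) = 1) \<and>
     (\<forall>i\<in>{1..nI}. 0 \<le> p i \<and> p i \<le> P i) \<and>
     (\<forall>i\<in>{1..nI}. 0 \<le> load nJ y i \<and> load nJ y i \<le> 1) \<and>
     (\<forall>i\<in>{1..nI}. \<forall>j\<in>{1..nJ}. 0 \<le> y i j \<and> y i j \<le> x i j \<and> x i j \<in> {0, 1})"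

definition optimal :: "nat \<Rightarrow> nat \<Rightarrow> real \<Rightarrow> real \<Rightarrow> (nat \<Rightarrow> nat \<Rightarrow> real) \<Rightarrow> real \<Rightarrow>
    (nat \<Rightarrow> real) \<Rightarrow> (nat \<Rightarrow> real) \<Rightarrow>
    (nat \<Rightarrow> nat \<Rightarrow> real) \<Rightarrow> (nat \<Rightarrow> nat \<Rightarrow> real) \<Rightarrow> (nat \<Rightarrow> real) \<Rightarrow> bool" where
  "optimal nI nJ K B g \<sigma>2 \<omega> P x y p \<longleftrightarrow>
     feasible nI nJ P x y p \<and>
     (\<forall>x' y' p'. feasible nI nJ P x' y' p' \<longrightarrow>
        objective nI nJ K B g \<sigma>2 \<omega> y' p' \<le> objective nI nJ K B g \<sigma>2 \<omega> y p)"

end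

theory Submission
  imports Defs
begin

text \<open>At an optimum every user has a positive rate, since serving all users from one BS at full
  power already gives a finite objective. The SINRs depend on the resource allocation only through
  the loads, and each user in \<open>J\<^sub>i\<close> is served by BS \<open>i\<close> alone. Hence moving resources among the users
  of BS \<open>i\<close> while keeping its load \<open>d\<^sub>i\<close> fixed scales their rates linearly and leaves all other
  rates unchanged, so the objective changes by \<open>\<Sum>\<^sub>j \<omega>\<^sub>j log\<^sub>2 (y'\<^sub>i\<^sub>j / y\<^sub>i\<^sub>j)\<close>. By Gibbs' inequality
  the proportional allocation \<open>y\<^sub>i\<^sub>j = \<omega>\<^sub>j d\<^sub>i / \<Sum>\<^sub>l \<omega>\<^sub>l\<close> is the unique maximiser of this change.\<close>

lemma weighted_log_ratio_sum_neg:
  fixes w y :: "'a \<Rightarrow> real"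
  assumes fin: "finite S" and c: "c > 0" and w: "\<forall>j\<in>S. w j > 0" and y: "\<forall>j\<in>S. y j > 0"
    and sum_eq: "(\<Sum>j\<in>S. y j) = c * (\<Sum>j\<in>S. w j)"
    and differ: "\<exists>j\<in>S. y j \<noteq> c * w j"
  shows "(\<Sum>j\<in>S. w j * ln (y j / (c * w j))) < 0"
proof -
  have "(\<Sum>j\<in>S. w j * ln (y j / (c * w j))) < (\<Sum>j\<in>S. w j * (y j / (c * w j) - 1))"
  proof (rule sum_strict_mono_ex1[OF fin])
    show "\<forall>j\<in>S. w j * ln (y j / (c * w j)) \<le> w j * (y j / (c * w j) - 1)"
      using w y c by (auto intro!: mult_left_mono ln_le_minus_one)
    from differ obtain a where a: "a \<in> S" "y a / (c * w a) \<noteq> 1"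
      using w c by (auto simp: field_simps)
    then have "ln (y a / (c * w a)) < y a / (c * w a) - 1"
      using w y c ln_le_minus_one ln_eq_minus_one by (metis divide_pos_pos mult_pos_pos order_less_le)
    then show "\<exists>j\<in>S. w j * ln (y j / (c * w j)) < w j * (y j / (c * w j) - 1)"
      using a w by auto
  qed
  also have "(\<Sum>j\<in>S. w j * (y j / (c * w j) - 1)) = (\<Sum>j\<in>S. y j / c - w j)"
    using w c by (intro sum.cong) (auto simp: field_simps)
  also have "\<dots> = 0"
    using sum_eq c by (simp add: sum_subtractf sum_divide_distrib[symmetric])
  finally show ?thesis .
qed

lemma sinr_load_cong:
  assumes "\<forall>k\<in>{1..nI}. load nJ y' k = load nJ y k"
  shows "sinr nI nJ g \<sigma>2 y' p i j = sinr nI nJ g \<sigma>2 y p i j"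
  unfolding sinr_def using assms by (auto intro!: sum.cong arg_cong2[where f="(/)"])

lemma objective_eq_sum_log:
  assumes "\<forall>j\<in>{1..nJ}. rate nI nJ K B g \<sigma>2 y p j > 0"
  shows "objective nI nJ K B g \<sigma>2 \<omega> y p =
           ereal (\<Sum>j\<in>{1..nJ}. \<omega> j * log 2 (rate nI nJ K B g \<sigma>2 y p j))"
  unfolding objective_def sum_ereal[symmetric] using assms
  by (intro sum.cong) (auto simp: elog2_def)

lemma objective_eq_MInfty:
  assumes "\<forall>j\<in>{1..nJ}. \<omega> j > 0" and "j0 \<in> {1..nJ}" and "rate nI nJ K B g \<sigma>2 y p j0 \<le> 0"
  shows "objective nI nJ K B g \<sigma>2 \<omega> y p = -\<infinity>"
proof -
  let ?f = "\<lambda>j. ereal (\<omega> j) * elog2 (rate nI nJ K B g \<sigma>2 y p j)"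
  have "\<omega> j0 > 0"
    using assms(1,2) by blast
  then have minus_inf: "?f j0 = -\<infinity>"
    using assms(3) by (simp add: elog2_def)
  have "\<forall>j\<in>{1..nJ}. ?f j \<noteq> \<infinity>"
    using assms(1) by (auto simp: elog2_def)
  then have rest: "(\<Sum>j\<in>{1..nJ}-{j0}. ?f j) \<noteq> \<infinity>"
    by (simp add: sum_Pinfty)
  have "objective nI nJ K B g \<sigma>2 \<omega> y p = ?f j0 + (\<Sum>j\<in>{1..nJ}-{j0}. ?f j)"
    unfolding objective_def using assms(2) by (simp add: sum.remove)
  then show ?thesis
    using minus_inf rest by simp
qed

lemma rate_single_server:
  assumes "i \<in> {1..nI}" and "\<forall>k\<in>{1..nI}. k \<noteq> i \<longrightarrow> y k j = 0"
  shows "rate nI nJ K B g \<sigma>2 y p j = K * B * (y i j * log 2 (1 + sinr nI nJ g \<sigma>2 y p i j))"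
  unfolding rate_def using assms by (simp add: sum.remove)

lemma feasible_unserved_zero:
  assumes "feasible nI nJ P x y p" and "i \<in> {1..nI}" and "j \<in> {1..nJ}" and "x i j \<noteq> 1"
  shows "y i j = 0"
  using assms unfolding feasible_def by force

lemma feasible_served_exclusively:
  assumes feas: "feasible nI nJ P x y p" and j: "j \<in> {1..nJ}"
    and i: "i \<in> {1..nI}" "x i j = 1" and k: "k \<in> {1..nI}" "k \<noteq> i"
  shows "y k j = 0"
proof -
  have x01: "\<forall>k\<in>{1..nI}. x k j \<in> {0, 1}" and "(\<Sum>k\<in>{1..nI}. x k j) = 1"
    using feas j unfolding feasible_def by auto
  then have "(\<Sum>k\<in>{1..nI}-{i}. x k j) = 0"
    using i by (simp add: sum.remove)
  moreover have "\<forall>k\<in>{1..nI}-{i}. 0 \<le> x k j"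
    using x01 by auto
  ultimately have "x k j = 0"
    using k by (subst (asm) sum_nonneg_eq_0_iff) auto
  then show ?thesis
    using feasible_unserved_zero[OF feas k(1) j] by simp
qed

lemma feasible_served_rate:
  assumes "feasible nI nJ P x y p" and "j \<in> {1..nJ}" and "i \<in> {1..nI}" and "x i j = 1"
  shows "rate nI nJ K B g \<sigma>2 y p j = K * B * (y i j * log 2 (1 + sinr nI nJ g \<sigma>2 y p i j))"
  using assms feasible_served_exclusively by (intro rate_single_server) blast+

definition served :: "nat \<Rightarrow> (nat \<Rightarrow> nat \<Rightarrow> real) \<Rightarrow> nat \<Rightarrow> nat set" where
  "served nJ x i = {j\<in>{1..nJ}. x i j = 1}"

lemma feasible_load_eq_served_sum:
  assumes "feasible nI nJ P x y p" and "i \<in> {1..nI}"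
  shows "load nJ y i = (\<Sum>j\<in>served nJ x i. y i j)"
  unfolding load_def served_def using assms feasible_unserved_zero
  by (intro sum.mono_neutral_right) auto

lemma feasible_weight_sum_eq_served_sum:
  assumes "feasible nI nJ P x y p" and "i \<in> {1..nI}"
  shows "(\<Sum>l\<in>{1..nJ}. \<omega> l * x i l) = (\<Sum>l\<in>served nJ x i. \<omega> l)"
proof -
  have "\<forall>l\<in>{1..nJ}. x i l \<in> {0, 1}"
    using assms unfolding feasible_def by auto
  then show ?thesis
    unfolding served_def by (intro sum.mono_neutral_cong_right) auto
qed

lemma feasible_sinr_nonneg:
  assumes "feasible nI nJ P x y p" and "i \<in> {1..nI}"
    and "\<sigma>2 > 0" and "\<forall>k\<in>{1..nI}. g k j \<ge> 0"
  shows "sinr nI nJ g \<sigma>2 y p i j \<ge> 0"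
proof -
  have nonneg: "\<forall>k\<in>{1..nI}. 0 \<le> load nJ y k \<and> 0 \<le> p k"
    using assms(1) unfolding feasible_def by auto
  then have "(\<Sum>k\<in>{1..nI} - {i}. load nJ y k * p k * g k j) \<ge> 0"
    using assms(4) by (intro sum_nonneg) auto
  then show ?thesis
    unfolding sinr_def using assms nonneg by (auto intro!: divide_nonneg_pos)
qed

lemma exists_feasible_with_positive_rates:
  assumes "nI \<ge> 1" and "nJ \<ge> 1" and "K > 0" and "B > 0" and "\<sigma>2 > 0"
    and "\<forall>j\<in>{1..nJ}. g 1 j > 0" and "\<forall>i\<in>{1..nI}. P i > 0"
  shows "\<exists>x y p. feasible nI nJ P x y p \<and> (\<forall>j\<in>{1..nJ}. rate nI nJ K B g \<sigma>2 y p j > 0)"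
proof -
  define x :: "nat \<Rightarrow> nat \<Rightarrow> real" where "x = (\<lambda>i j. if i = 1 then 1 else 0)"
  define y :: "nat \<Rightarrow> nat \<Rightarrow> real" where "y = (\<lambda>i j. if i = 1 then 1 / real nJ else 0)"
  have load_y: "load nJ y k = (if k = 1 then 1 else 0)" for k
    unfolding load_def y_def using assms(2) by auto
  have "feasible nI nJ P x y P"
    unfolding feasible_def load_y using assms(1,2,7) by (auto simp: x_def y_def sum.delta)
  moreover have "rate nI nJ K B g \<sigma>2 y P j > 0" if j: "j \<in> {1..nJ}" for j
  proof -
    have "sinr nI nJ g \<sigma>2 y P 1 j > 0"
      unfolding sinr_def using assms j by (auto simp: load_y)
    moreover have "rate nI nJ K B g \<sigma>2 y P j = K * B * (y 1 j * log 2 (1 + sinr nI nJ g \<sigma>2 y P 1 j))"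
      using assms(1) by (intro rate_single_server) (auto simp: y_def)
    ultimately show ?thesis
      using assms(2-4) by (simp add: y_def)
  qed
  ultimately show ?thesis
    by blast
qed

lemma optimal_rate_pos:
  assumes opt: "optimal nI nJ K B g \<sigma>2 \<omega> P x y p"
    and "K > 0" and "B > 0" and "\<sigma>2 > 0" and "\<forall>i\<in>{1..nI}. \<forall>j\<in>{1..nJ}. g i j > 0"
    and \<omega>: "\<forall>j\<in>{1..nJ}. \<omega> j > 0" and "\<forall>i\<in>{1..nI}. P i > 0"
    and j: "j \<in> {1..nJ}"
  shows "rate nI nJ K B g \<sigma>2 y p j > 0"
proof (rule ccontr)
  assume "\<not> ?thesis"
  then have y_minus_inf: "objective nI nJ K B g \<sigma>2 \<omega> y p = -\<infinity>"
    using objective_eq_MInfty[OF \<omega> j] by simp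
  have "(\<Sum>i\<in>{1..nI}. x i j) = 1"
    using opt j unfolding optimal_def feasible_def by blast
  then have "nI \<ge> 1"
    by (cases "nI = 0") auto
  then obtain x' y' p' where feas': "feasible nI nJ P x' y' p'"
      and "\<forall>j\<in>{1..nJ}. rate nI nJ K B g \<sigma>2 y' p' j > 0"
    using exists_feasible_with_positive_rates[of nI nJ K B \<sigma>2 g P] assms j by auto
  then have "objective nI nJ K B g \<sigma>2 \<omega> y' p' \<noteq> -\<infinity>"
    by (simp add: objective_eq_sum_log)
  moreover have "objective nI nJ K B g \<sigma>2 \<omega> y' p' \<le> objective nI nJ K B g \<sigma>2 \<omega> y p"
    using opt feas' unfolding optimal_def by blast
  ultimately show False
    using y_minus_inf by simp
qed

definition reassign_row ::
    "nat \<Rightarrow> nat set \<Rightarrow> (nat \<Rightarrow> real) \<Rightarrow> (nat \<Rightarrow> nat \<Rightarrow> real) \<Rightarrow> nat \<Rightarrow> nat \<Rightarrow> real" where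
  "reassign_row i S z y = (\<lambda>k j. if k = i \<and> j \<in> S then z j else y k j)"

lemma load_reassign_row:
  assumes "feasible nI nJ P x y p" and "i \<in> {1..nI}"
    and "(\<Sum>j\<in>served nJ x i. z j) = load nJ y i"
  shows "load nJ (reassign_row i (served nJ x i) z y) k = load nJ y k"
proof (cases "k = i")
  case True
  have "load nJ (reassign_row i (served nJ x i) z y) i = (\<Sum>j\<in>served nJ x i. z j)"
    unfolding load_def reassign_row_def served_def using assms(1,2) feasible_unserved_zero
    by (intro sum.mono_neutral_cong_right) auto
  then show ?thesis
    using True assms(3) by simp
qed (simp add: load_def reassign_row_def)

lemma feasible_reassign_row:
  assumes feas: "feasible nI nJ P x y p" and i: "i \<in> {1..nI}"
    and z_nonneg: "\<forall>j\<in>served nJ x i. z j \<ge> 0"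
    and z_sum: "(\<Sum>j\<in>served nJ x i. z j) = load nJ y i"
  shows "feasible nI nJ P x (reassign_row i (served nJ x i) z y) p"
proof -
  have "z j \<le> 1" if "j \<in> served nJ x i" for j
  proof -
    have "z j \<le> (\<Sum>j\<in>served nJ x i. z j)"
      using z_nonneg that by (intro member_le_sum) (auto simp: served_def)
    also have "\<dots> \<le> 1"
      using feas i z_sum unfolding feasible_def by auto
    finally show ?thesis .
  qed
  then show ?thesis
    using feas z_nonneg load_reassign_row[OF feas i z_sum]
    unfolding feasible_def reassign_row_def served_def by auto
qed

lemma optimal_served_pos:
  assumes opt: "optimal nI nJ K B g \<sigma>2 \<omega> P x y p"
    and K: "K > 0" and B: "B > 0" and \<sigma>: "\<sigma>2 > 0" and g: "\<forall>i\<in>{1..nI}. \<forall>j\<in>{1..nJ}. g i j > 0"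
    and "\<forall>j\<in>{1..nJ}. \<omega> j > 0" and "\<forall>i\<in>{1..nI}. P i > 0"
    and i: "i \<in> {1..nI}" and j: "j \<in> served nJ x i"
  shows "y i j > 0" and "log 2 (1 + sinr nI nJ g \<sigma>2 y p i j) > 0"
proof -
  have feas: "feasible nI nJ P x y p" and j': "j \<in> {1..nJ}" "x i j = 1"
    using opt j unfolding optimal_def served_def by auto
  have "0 < rate nI nJ K B g \<sigma>2 y p j"
    using optimal_rate_pos assms j' by blast
  also have "rate nI nJ K B g \<sigma>2 y p j = K * B * (y i j * log 2 (1 + sinr nI nJ g \<sigma>2 y p i j))"
    by (rule feasible_served_rate[OF feas j'(1) i j'(2)])
  finally have "0 < y i j * log 2 (1 + sinr nI nJ g \<sigma>2 y p i j)"
    using K B by (metis mult_pos_pos zero_less_mult_pos)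
  moreover have "0 \<le> y i j"
    using feas i j' unfolding feasible_def by auto
  moreover have "0 \<le> sinr nI nJ g \<sigma>2 y p i j"
    using feasible_sinr_nonneg[OF feas i \<sigma>] g j' by (simp add: less_imp_le)
  ultimately show "y i j > 0" and "log 2 (1 + sinr nI nJ g \<sigma>2 y p i j) > 0"
    by (auto simp: zero_less_mult_iff)
qed

lemma rate_reassign_row:
  assumes feas: "feasible nI nJ P x y p" and i: "i \<in> {1..nI}"
    and z_nonneg: "\<forall>j\<in>served nJ x i. z j \<ge> 0"
    and z_sum: "(\<Sum>j\<in>served nJ x i. z j) = load nJ y i"
    and j: "j \<in> {1..nJ}"
  shows "rate nI nJ K B g \<sigma>2 (reassign_row i (served nJ x i) z y) p j =
           (if j \<in> served nJ x i then K * B * (z j * log 2 (1 + sinr nI nJ g \<sigma>2 y p i j))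
            else rate nI nJ K B g \<sigma>2 y p j)"
proof -
  let ?y' = "reassign_row i (served nJ x i) z y"
  have sinr_eq: "sinr nI nJ g \<sigma>2 ?y' p k j = sinr nI nJ g \<sigma>2 y p k j" for k
    using load_reassign_row[OF feas i z_sum] by (intro sinr_load_cong) blast
  show ?thesis
  proof (cases "j \<in> served nJ x i")
    case True
    then have "x i j = 1" and "?y' i j = z j"
      by (simp_all add: served_def reassign_row_def)
    then show ?thesis
      using True feasible_served_rate[OF feasible_reassign_row[OF feas i z_nonneg z_sum] j i]
      by (simp add: sinr_eq)
  next
    case False
    then have "?y' k j = y k j" for k
      by (simp add: reassign_row_def)
    then show ?thesis
      using False unfolding rate_def by (simp add: sinr_eq)
  qed
qed

lemma optimal_served_log_ratio_nonneg:
  assumes opt: "optimal nI nJ K B g \<sigma>2 \<omega> P x y p"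
    and K: "K > 0" and B: "B > 0" and \<sigma>: "\<sigma>2 > 0" and g: "\<forall>i\<in>{1..nI}. \<forall>j\<in>{1..nJ}. g i j > 0"
    and \<omega>: "\<forall>j\<in>{1..nJ}. \<omega> j > 0" and P: "\<forall>i\<in>{1..nI}. P i > 0"
    and i: "i \<in> {1..nI}"
    and z_pos: "\<forall>j\<in>served nJ x i. z j > 0"
    and z_sum: "(\<Sum>j\<in>served nJ x i. z j) = load nJ y i"
  shows "(\<Sum>j\<in>served nJ x i. \<omega> j * ln (y i j / z j)) \<ge> 0"
proof -
  let ?S = "served nJ x i"
  let ?y' = "reassign_row i ?S z y"
  let ?r = "rate nI nJ K B g \<sigma>2 y p" and ?r' = "rate nI nJ K B g \<sigma>2 ?y' p"
  let ?c = "\<lambda>j. log 2 (1 + sinr nI nJ g \<sigma>2 y p i j)"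
  have feas: "feasible nI nJ P x y p"
    using opt unfolding optimal_def by blast
  have z_nonneg: "\<forall>j\<in>?S. z j \<ge> 0"
    using z_pos by (simp add: less_imp_le)
  note rate' = rate_reassign_row[OF feas i z_nonneg z_sum]
  note served_pos = optimal_served_pos[OF opt K B \<sigma> g \<omega> P i]
  have S_sub: "?S \<subseteq> {1..nJ}"
    by (auto simp: served_def)
  have r_pos: "\<forall>j\<in>{1..nJ}. ?r j > 0"
    using optimal_rate_pos[OF opt K B \<sigma> g \<omega> P] by blast
  have r'_pos: "\<forall>j\<in>{1..nJ}. ?r' j > 0"
    using rate' r_pos served_pos(2) z_pos K B by simp
  have "objective nI nJ K B g \<sigma>2 \<omega> ?y' p \<le> objective nI nJ K B g \<sigma>2 \<omega> y p"
    using opt feasible_reassign_row[OF feas i z_nonneg z_sum] unfolding optimal_def by blast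
  then have total: "(\<Sum>j\<in>{1..nJ}. \<omega> j * log 2 (?r' j)) \<le> (\<Sum>j\<in>{1..nJ}. \<omega> j * log 2 (?r j))"
    using r_pos r'_pos by (simp add: objective_eq_sum_log)
  have gain: "\<omega> j * log 2 (?r j) - \<omega> j * log 2 (?r' j) = \<omega> j * ln (y i j / z j) / ln 2"
    if j: "j \<in> ?S" for j
  proof -
    have j': "j \<in> {1..nJ}" "x i j = 1"
      using j by (auto simp: served_def)
    have r: "?r j = K * B * (y i j * ?c j)"
      by (rule feasible_served_rate[OF feas j'(1) i j'(2)])
    have r': "?r' j = K * B * (z j * ?c j)"
      using rate' j j' by simp
    have "log 2 (?r j) - log 2 (?r' j) = log 2 (?r j / ?r' j)"
      using r_pos r'_pos j'(1) by (simp add: log_divide less_imp_neq[symmetric])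
    also have "?r j / ?r' j = y i j / z j"
      unfolding r r' using K B served_pos(2)[OF j] z_pos j by simp
    finally have "log 2 (?r j) - log 2 (?r' j) = log 2 (y i j / z j)" .
    then show ?thesis
      unfolding right_diff_distrib[symmetric] by (simp add: log_def)
  qed
  have "(\<Sum>j\<in>{1..nJ}. \<omega> j * log 2 (?r j)) - (\<Sum>j\<in>{1..nJ}. \<omega> j * log 2 (?r' j))
      = (\<Sum>j\<in>{1..nJ}. \<omega> j * log 2 (?r j) - \<omega> j * log 2 (?r' j))"
    by (simp add: sum_subtractf)
  also have "\<dots> = (\<Sum>j\<in>?S. \<omega> j * log 2 (?r j) - \<omega> j * log 2 (?r' j))"
    using rate' S_sub by (intro sum.mono_neutral_right) auto
  also have "\<dots> = (\<Sum>j\<in>?S. \<omega> j * ln (y i j / z j)) / ln 2"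
    using gain by (simp add: sum_divide_distrib)
  finally have "(\<Sum>j\<in>?S. \<omega> j * ln (y i j / z j)) / ln 2 \<ge> 0"
    using total by linarith
  then show ?thesis
    by (simp add: zero_le_divide_iff)
qed

theorem theorem1:
  fixes nI nJ :: nat and K B \<sigma>2 :: real
    and g :: "nat \<Rightarrow> nat \<Rightarrow> real" and \<omega> P :: "nat \<Rightarrow> real"
    and xs ys :: "nat \<Rightarrow> nat \<Rightarrow> real" and ps :: "nat \<Rightarrow> real"
  assumes "K > 0" and "B > 0" and "\<sigma>2 > 0"
    and "\<forall>i\<in>{1..nI}. \<forall>j\<in>{1..nJ}. g i j > 0"
    and "\<forall>j\<in>{1..nJ}. \<omega> j > 0"
    and "\<forall>i\<in>{1..nI}. P i > 0"
    and "optimal nI nJ K B g \<sigma>2 \<omega> P xs ys ps"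
  shows "\<forall>i\<in>{1..nI}. \<forall>j\<in>{j\<in>{1..nJ}. xs i j = 1}.
           ys i j = \<omega> j * xs i j * load nJ ys i / (\<Sum>l\<in>{1..nJ}. \<omega> l * xs i l)"
proof (intro ballI)
  fix i j0
  assume i: "i \<in> {1..nI}" and j0: "j0 \<in> {j\<in>{1..nJ}. xs i j = 1}"
  let ?S = "served nJ xs i" and ?d = "load nJ ys i" and ?W = "\<Sum>l\<in>{1..nJ}. \<omega> l * xs i l"
  have feas: "feasible nI nJ P xs ys ps"
    using assms(7) unfolding optimal_def by blast
  have j0_S: "j0 \<in> ?S" and fin: "finite ?S" and \<omega>_pos: "\<forall>j\<in>?S. \<omega> j > 0"
    using j0 assms(5) by (auto simp: served_def)
  have y_pos: "\<forall>j\<in>?S. ys i j > 0"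
    using optimal_served_pos(1)[OF assms(7,1-6) i] by blast
  have d_eq: "?d = (\<Sum>j\<in>?S. ys i j)" and W_eq: "?W = (\<Sum>j\<in>?S. \<omega> j)"
    using feasible_load_eq_served_sum feasible_weight_sum_eq_served_sum feas i by blast+
  have d_pos: "?d > 0" and W_pos: "?W > 0"
    unfolding d_eq W_eq using fin j0_S y_pos \<omega>_pos by (auto intro!: sum_pos)
  have proportional: "\<forall>j\<in>?S. ys i j = ?d / ?W * \<omega> j"
  proof (rule ccontr)
    assume "\<not> (\<forall>j\<in>?S. ys i j = ?d / ?W * \<omega> j)"
    then have "(\<Sum>j\<in>?S. \<omega> j * ln (ys i j / (?d / ?W * \<omega> j))) < 0"
      using d_pos W_pos fin \<omega>_pos y_pos d_eq W_eq
      by (intro weighted_log_ratio_sum_neg) auto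
    moreover have "(\<Sum>j\<in>?S. \<omega> j * ln (ys i j / (?d / ?W * \<omega> j))) \<ge> 0"
      using d_pos W_pos \<omega>_pos d_eq W_eq
      by (intro optimal_served_log_ratio_nonneg[OF assms(7,1-6) i])
        (auto simp: sum_distrib_left[symmetric] sum_divide_distrib[symmetric])
    ultimately show False
      by simp
  qed
  then show "ys i j0 = \<omega> j0 * xs i j0 * ?d / ?W"
    using j0 j0_S by simp
qed

end
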